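(* Let $(\mathbb{X},\oplus,\otimes,\mathbb{0},\mathbb{1})$ be a linearly ordered, algebraically complete idempotent semifield, let $\bm{A}_1,\ldots,\bm{A}_m\in\mathbb{X}^{n\times n}$ be matrices and $w_1,\ldots,w_m\in\mathbb{X}$ scalars such that $\bm{B}=w_{1}(\bm{A}_{1}\oplus\bm{A}_{1}^{-})\oplus\cdots\oplus w_{m}(\bm{A}_{m}\oplus\bm{A}_{m}^{-})$ has no zero entries. Let $\mu$ be the spectral radius of $\bm{B}$ and $\bm{B}_{\mu}=\mu^{-1}\bm{B}$. Consider the problem of minimizing $\max_{1\le i\le m} w_i\, d(\bm{A}_i,\bm{x}\bm{x}^{-})$ (i.e. $\bigoplus_{i=1}^m w_i d(\bm{A}_i,\bm{x}\bm{x}^{-})$) over all regular vectors $\bm{x}\in\mathbb{X}^n$. Then the minimum value equals $\mu$, and the set of all solutions is $\{\bm{x}=\bm{B}_{\mu}^{\ast}\bm{u}:\bm{u}\in\mathbb{X}^n,\ \bm{u}\ne\bm{0}\}$.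
   Context: An idempotent semifield is a set $\mathbb{X}$ with associative, commutative operations $\oplus$ (addition) and $\otimes$ (multiplication, usually omitted in writing) with neutral elements $\mathbb{0}$ and $\mathbb{1}$, multiplication distributing over addition, idempotent addition ($x\oplus x=x$), and every nonzero $x$ having an inverse $x^{-1}$ with $xx^{-1}=\mathbb{1}$. It is assumed linearly ordered by the order $x\le y \iff x\oplus y=y$, and algebraically complete: $x^p=a$ is solvable for every $a$ and integer $p>0$, so rational powers are defined. Matrix and vector operations (including scalar multiplication) use the usual formulas with $\oplus,\otimes$ in place of $+,\times$; $\bm{0}$ is the zero vector; a vector is regular if it has no zero entries. For a nonzero column vector $\bm{x}=(x_i)$, $\bm{x}^{-}$ is the row vector with entries $x_i^{-1}$ if $x_i\ne\mathbb{0}$ and $\mathbb{0}$ otherwise. For a nonzero matrix $\bm{A}=(a_{ij})$, $\bm{A}^{-}=(a^{-}_{ij})$ with $a^{-}_{ij}=a_{ji}^{-1}$ if $a_{ji}\neq\mathbb{0}$ and $\mathbb{0}$ otherwise. The trace is $\mathrm{tr}\,\bm{A}=a_{11}\oplus\cdots\oplus a_{nn}$. The distance between square matrices is $d(\bm{A},\bm{B})=\mathrm{tr}(\bm{B}^{-}\bm{A})\oplus\mathrm{tr}(\bm{A}^{-}\bm{B})$. $\bm{I}$ is the identity matrix, $\bm{A}^0=\bm{I}$, $\bm{A}^p=\bm{A}^{p-1}\bm{A}$. The spectral radius of $\bm{A}$ of order $n$ is $\lambda=\bigoplus_{k=1}^{n}\bigoplus_{1\le i_1,\ldots,i_k\le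 n}(a_{i_1i_2}a_{i_2i_3}\cdots a_{i_ki_1})^{1/k}$. For a square matrix $\bm{M}$ of order $n$, $\bm{M}^{\ast}=\bm{I}\oplus\bm{M}\oplus\cdots\oplus\bm{M}^{n-1}$. *)

theory Defs
  imports Main "HOL-Library.FuncSet"
begin

text \<open>Linearly ordered, algebraically complete idempotent semifield.
  Addition \<oplus> is rendered by +, multiplication \<otimes> by *, \<zero> by 0, \<one> by 1.\<close>

class idem_semifield = comm_semiring_1 + inverse + linorder +
  assumes add_idem: "x + x = x"
    and less_eq_add: "x \<le> y \<longleftrightarrow> x + y = y"
    and right_inverse_sf: "x \<noteq> 0 \<Longrightarrow> x * inverse x = 1"
    and alg_complete: "0 < p \<Longrightarrow> \<exists>x. x ^ p = a"

definition root_sf :: "nat \<Rightarrow> 'a::idem_semifield \<Rightarrow> 'a" where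
  "root_sf k a = (SOME x. x ^ k = a)"

definition mmult :: "('n::finite \<Rightarrow> 'n \<Rightarrow> 'a::idem_semifield) \<Rightarrow> ('n \<Rightarrow> 'n \<Rightarrow> 'a) \<Rightarrow> 'n \<Rightarrow> 'n \<Rightarrow> 'a" where
  "mmult M N = (\<lambda>i j. \<Sum>k\<in>UNIV. M i k * N k j)"

definition mvec :: "('n::finite \<Rightarrow> 'n \<Rightarrow> 'a::idem_semifield) \<Rightarrow> ('n \<Rightarrow> 'a) \<Rightarrow> 'n \<Rightarrow> 'a" where
  "mvec M x = (\<lambda>i. \<Sum>j\<in>UNIV. M i j * x j)"

definition madd :: "('n \<Rightarrow> 'n \<Rightarrow> 'a::idem_semifield) \<Rightarrow> ('n \<Rightarrow> 'n \<Rightarrow> 'a) \<Rightarrow> 'n \<Rightarrow> 'n \<Rightarrow> 'a" where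
  "madd M N = (\<lambda>i j. M i j + N i j)"

definition msmult :: "'a::idem_semifield \<Rightarrow> ('n \<Rightarrow> 'n \<Rightarrow> 'a) \<Rightarrow> 'n \<Rightarrow> 'n \<Rightarrow> 'a" where
  "msmult c M = (\<lambda>i j. c * M i j)"

definition mid :: "'n \<Rightarrow> 'n \<Rightarrow> 'a::idem_semifield" where
  "mid = (\<lambda>i j. if i = j then 1 else 0)"

primrec mpow :: "('n::finite \<Rightarrow> 'n \<Rightarrow> 'a::idem_semifield) \<Rightarrow> nat \<Rightarrow> 'n \<Rightarrow> 'n \<Rightarrow> 'a" where
  "mpow M 0 = mid"
| "mpow M (Suc p) = mmult (mpow M p) M"

definition vinv :: "('n \<Rightarrow> 'a::idem_semifield) \<Rightarrow> 'n \<Rightarrow> 'a" where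
  "vinv x = (\<lambda>i. if x i = 0 then 0 else inverse (x i))"

definition minv :: "('n \<Rightarrow> 'n \<Rightarrow> 'a::idem_semifield) \<Rightarrow> 'n \<Rightarrow> 'n \<Rightarrow> 'a" where
  "minv A = (\<lambda>i j. if A j i = 0 then 0 else inverse (A j i))"

definition outer_inv :: "('n \<Rightarrow> 'a::idem_semifield) \<Rightarrow> 'n \<Rightarrow> 'n \<Rightarrow> 'a" where
  "outer_inv x = (\<lambda>i j. x i * vinv x j)"

definition mtr :: "('n::finite \<Rightarrow> 'n \<Rightarrow> 'a::idem_semifield) \<Rightarrow> 'a" where
  "mtr A = (\<Sum>i\<in>UNIV. A i i)"

definition mdist :: "('n::finite \<Rightarrow> 'n \<Rightarrow> 'a::idem_semifield) \<Rightarrow> ('n \<Rightarrow> 'n \<Rightarrow> 'a) \<Rightarrow> 'a" where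
  "mdist A B = mtr (mmult (minv B) A) + mtr (mmult (minv A) B)"

definition regular :: "('n \<Rightarrow> 'a::idem_semifield) \<Rightarrow> bool" where
  "regular x \<longleftrightarrow> (\<forall>i. x i \<noteq> 0)"

definition spec_rad :: "('n::finite \<Rightarrow> 'n \<Rightarrow> 'a::idem_semifield) \<Rightarrow> 'a" where
  "spec_rad A = (\<Sum>k\<in>{1 .. card (UNIV::'n set)}. \<Sum>s\<in>PiE {..<k} (\<lambda>_. (UNIV::'n set)).
      root_sf k (\<Prod>j<k. A (s j) (s (Suc j mod k))))"

definition kstar :: "('n::finite \<Rightarrow> 'n \<Rightarrow> 'a::idem_semifield) \<Rightarrow> 'n \<Rightarrow> 'n \<Rightarrow> 'a" where
  "kstar M = (\<lambda>i j. \<Sum>p<card (UNIV::'n set). mpow M p i j)"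

end

theory Submission
  imports Defs
begin

text \<open>For regular \<open>x\<close> the objective equals \<open>x\<^sup>- B x = \<Oplus>\<^sub>i\<^sub>j x\<^sub>i\<^sup>-\<^sup>1 b\<^sub>i\<^sub>j x\<^sub>j\<close>,
  since the two traces in each distance contribute \<open>A\<^sub>k\<close> and \<open>A\<^sub>k\<^sup>-\<close>. Every cycle weight
  of \<open>B\<close> is a product of such terms around the cycle, in which the \<open>x\<^sub>i\<close> cancel, so
  \<open>\<mu> \<le> x\<^sup>- B x\<close>. Hence the minimisers are the regular \<open>x\<close> with \<open>x\<^sup>- B x \<le> \<mu>\<close>, i.e. with
  \<open>B\<^sub>\<mu> x \<le> x\<close>. Since all cycles of \<open>B\<^sub>\<mu>\<close> have weight at most \<open>\<one>\<close>, every path can be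
  shortened to one of length \<open>< n\<close> without losing weight, so \<open>B\<^sub>\<mu>\<^sup>\<ast>\<close> dominates all powers
  of \<open>B\<^sub>\<mu>\<close>; thus \<open>B\<^sub>\<mu>\<^sup>\<ast> u\<close> solves \<open>B\<^sub>\<mu> x \<le> x\<close>, and conversely each solution satisfies
  \<open>x = B\<^sub>\<mu>\<^sup>\<ast> x\<close>.\<close>

section \<open>Arithmetic in idempotent semifields\<close>

context idem_semifield begin

lemma sf_zero_least: "0 \<le> x"
  by (simp add: less_eq_add)

lemma sf_add_eq_max: "x + y = max x y"
proof (cases "x \<le> y")
  case True
  then show ?thesis using less_eq_add by (simp add: max_def)
next
  case False
  then have "y + x = x" using less_eq_add[of y x] by (simp add: not_le less_imp_le)
  then show ?thesis using False by (simp add: max_def add.commute)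
qed

lemma sf_add_le_iff: "x + y \<le> z \<longleftrightarrow> x \<le> z \<and> y \<le> z"
  by (simp add: sf_add_eq_max)

lemma sf_mult_right_mono: "a \<le> b \<Longrightarrow> a * c \<le> b * c"
  using less_eq_add[of a b] less_eq_add[of "a * c" "b * c"] by (simp add: distrib_right[symmetric])

lemma sf_mult_left_mono: "a \<le> b \<Longrightarrow> c * a \<le> c * b"
  using sf_mult_right_mono by (simp add: mult.commute)

lemma sf_mult_mono: "a \<le> b \<Longrightarrow> c \<le> d \<Longrightarrow> a * c \<le> b * d"
  by (meson order_trans sf_mult_left_mono sf_mult_right_mono)

lemma sf_add_mono: "a \<le> b \<Longrightarrow> c \<le> d \<Longrightarrow> a + c \<le> b + d"
  unfolding sf_add_eq_max by (rule max.mono)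

lemma sf_left_inverse: "x \<noteq> 0 \<Longrightarrow> inverse x * x = 1"
  using right_inverse_sf by (simp add: mult.commute)

lemma sf_inverse_unique: "a * b = 1 \<Longrightarrow> b = inverse a"
proof -
  assume ab: "a * b = 1"
  then have "a \<noteq> 0" by auto
  then have "b = (inverse a * a) * b" using sf_left_inverse by simp
  also have "\<dots> = inverse a" using ab by (simp add: mult.assoc)
  finally show ?thesis .
qed

lemma sf_mult_nonzero: "a \<noteq> 0 \<Longrightarrow> b \<noteq> 0 \<Longrightarrow> a * b \<noteq> 0"
  using sf_left_inverse[of a] by (metis mult.assoc mult_1_left mult_zero_right)

lemma sf_inverse_nonzero: "x \<noteq> 0 \<Longrightarrow> inverse x \<noteq> 0"
  by (metis mult_zero_right right_inverse_sf zero_neq_one)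

lemma sf_inverse_mult: "a \<noteq> 0 \<Longrightarrow> b \<noteq> 0 \<Longrightarrow> inverse (a * b) = inverse a * inverse b"
proof -
  assume "a \<noteq> 0" "b \<noteq> 0"
  then have "(a * b) * (inverse a * inverse b) = 1"
    using right_inverse_sf[of a] right_inverse_sf[of b] by (simp add: ac_simps)
  then show ?thesis by (rule sf_inverse_unique[symmetric])
qed

lemma sf_inverse_inverse: "a \<noteq> 0 \<Longrightarrow> inverse (inverse a) = a"
  using sf_inverse_unique sf_left_inverse by metis

lemma sf_mult_le_cancel_left: "c \<noteq> 0 \<Longrightarrow> c * a \<le> c * b \<longleftrightarrow> a \<le> b"
  using sf_mult_left_mono[of "c * a" "c * b" "inverse c"] sf_mult_left_mono[of a b c]
    sf_left_inverse[of c]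
  by (auto simp: mult.assoc[symmetric])

lemma sf_sum_le_iff: "finite A \<Longrightarrow> sum f A \<le> c \<longleftrightarrow> (\<forall>x\<in>A. f x \<le> c)"
  by (induction A rule: finite_induct) (auto simp: sf_add_le_iff sf_zero_least)

lemma sf_member_le_sum: "finite A \<Longrightarrow> x \<in> A \<Longrightarrow> f x \<le> sum f A"
  using sf_sum_le_iff[of A f "sum f A"] by auto

lemma sf_sum_mono: "(\<And>x. x \<in> A \<Longrightarrow> f x \<le> g x) \<Longrightarrow> sum f A \<le> sum g A"
  by (induction A rule: infinite_finite_induct) (auto intro!: sf_add_mono)

lemma sf_prod_mono: "(\<And>x. x \<in> A \<Longrightarrow> f x \<le> g x) \<Longrightarrow> prod f A \<le> prod g A"
  by (induction A rule: infinite_finite_induct) (auto intro!: sf_mult_mono)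

lemma sf_power_mono: "a \<le> b \<Longrightarrow> a ^ k \<le> b ^ k"
  by (induction k) (auto intro: sf_mult_mono)

lemma sf_power_le_self: "z \<le> 1 \<Longrightarrow> 0 < k \<Longrightarrow> z ^ k \<le> z"
proof (induction k)
  case (Suc k)
  show ?case
  proof (cases "k = 0")
    case False
    then have "z ^ k \<le> 1" using Suc by auto
    then show ?thesis using sf_mult_left_mono[of "z ^ k" 1 z] by simp
  qed simp
qed simp

text \<open>If \<open>x < y\<close> but \<open>x\<^sup>k = y\<^sup>k\<close>, then \<open>z = x y\<^sup>-\<^sup>1 < \<one>\<close> satisfies \<open>z\<^sup>k = \<one>\<close>,
  contradicting \<open>z\<^sup>k \<le> z\<close>.\<close>

lemma sf_power_less: "x < y \<Longrightarrow> 0 < k \<Longrightarrow> x ^ k < y ^ k"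
proof (rule ccontr)
  assume xy: "x < y" and k: "0 < k" and "\<not> x ^ k < y ^ k"
  then have eq: "x ^ k = y ^ k" using sf_power_mono[of x y k] by (simp add: less_imp_le)
  have y: "y \<noteq> 0" using xy sf_zero_least[of x] by auto
  define z where "z = x * inverse y"
  have "z \<le> 1"
    using sf_mult_right_mono[of x y "inverse y"] xy right_inverse_sf[OF y]
    by (simp add: z_def less_imp_le)
  moreover have "z \<noteq> 1"
    using xy sf_inverse_unique[of "inverse y" x] sf_inverse_inverse[OF y]
    by (auto simp: z_def mult.commute)
  moreover have "z ^ k = (y * inverse y) ^ k" using eq by (simp add: z_def power_mult_distrib)
  then have "z ^ k = 1" using right_inverse_sf[OF y] by simp
  ultimately show False using sf_power_le_self[of z k] k by simp
qed

lemma sf_power_le_cancel: "0 < k \<Longrightarrow> x ^ k \<le> y ^ k \<Longrightarrow> x \<le> y"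
  using sf_power_less[of y x k] by (meson not_le)

end

lemma root_sf_power: "0 < k \<Longrightarrow> root_sf k a ^ k = a"
  unfolding root_sf_def by (rule someI_ex[OF alg_complete])

lemma root_sf_le_iff: "0 < k \<Longrightarrow> root_sf k a \<le> c \<longleftrightarrow> a \<le> c ^ k"
  by (metis root_sf_power sf_power_le_cancel sf_power_mono)

section \<open>Matrix powers and paths\<close>

lemma card_UNIV_pos: "0 < card (UNIV :: 'n::finite set)"
  by (simp add: card_gt_0_iff)

lemma mpow_1: "mpow M 1 = M"
proof -
  have "(\<Sum>k\<in>UNIV. mid i k * M k j) = M i j" for i j
    by (simp add: mid_def if_distrib[of "\<lambda>c. c * _"] cong: if_cong)
  then show ?thesis by (simp add: mmult_def fun_eq_iff)
qed

lemma mult_mpow_le_mpow_Suc: "M i j * mpow M p j l \<le> mpow M (Suc p) i l"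
proof (induction p arbitrary: l)
  case 0
  show ?case using mpow_1[of M] by (simp add: mid_def sf_zero_least)
next
  case (Suc p)
  have "M i j * mpow M (Suc p) j l = (\<Sum>k\<in>UNIV. M i j * mpow M p j k * M k l)"
    by (simp add: mmult_def sum_distrib_left mult.assoc)
  also have "\<dots> \<le> (\<Sum>k\<in>UNIV. mpow M (Suc p) i k * M k l)"
    by (intro sf_sum_mono sf_mult_right_mono Suc.IH)
  finally show ?case by (simp add: mmult_def)
qed

lemma mpow_le_kstar_short: "p < card (UNIV :: 'n set) \<Longrightarrow> mpow M p i j \<le> kstar M i j"
  for M :: "'n::finite \<Rightarrow> 'n \<Rightarrow> 'a::idem_semifield"
  unfolding kstar_def by (rule sf_member_le_sum) auto

definition path_weight :: "('n \<Rightarrow> 'n \<Rightarrow> 'a::idem_semifield) \<Rightarrow> (nat \<Rightarrow> 'n) \<Rightarrow> nat \<Rightarrow> 'a" where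
  "path_weight M s p = (\<Prod>t<p. M (s t) (s (Suc t)))"

lemma path_weight_Suc: "path_weight M s (Suc p) = path_weight M s p * M (s p) (s (Suc p))"
  by (simp add: path_weight_def)

lemma path_weight_cong: "(\<And>t. t \<le> p \<Longrightarrow> s t = s' t) \<Longrightarrow> path_weight M s p = path_weight M s' p"
  unfolding path_weight_def by (intro prod.cong) auto

lemma path_weight_le_mpow: "s 0 = i \<Longrightarrow> s p = j \<Longrightarrow> path_weight M s p \<le> mpow M p i j"
proof (induction p arbitrary: j)
  case 0
  then show ?case by (simp add: path_weight_def mid_def)
next
  case (Suc p)
  have "path_weight M s (Suc p) \<le> mpow M p i (s p) * M (s p) j"
    using Suc by (simp add: path_weight_Suc sf_mult_right_mono)
  also have "\<dots> \<le> (\<Sum>k\<in>UNIV. mpow M p i k * M k j)"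
    by (rule sf_member_le_sum) auto
  finally show ?case by (simp add: mmult_def)
qed

text \<open>The factor \<open>a\<close> makes the induction go through: extending a path by the edge \<open>k \<rightarrow> j\<close>
  moves \<open>M k j\<close> into it.\<close>

lemma mpow_le_by_paths:
  "(\<And>s. s 0 = i \<Longrightarrow> s p = j \<Longrightarrow> a * path_weight M s p \<le> c) \<Longrightarrow> a * mpow M p i j \<le> c"
proof (induction p arbitrary: j a)
  case 0
  then show ?case
    using "0.prems"[of "\<lambda>_. i"] by (simp add: path_weight_def mid_def sf_zero_least)
next
  case (Suc p)
  have "(a * M k j) * mpow M p i k \<le> c" for k
  proof (rule Suc.IH)
    fix s assume s: "s 0 = i" "s p = k"
    let ?s' = "s(Suc p := j)"
    have "path_weight M ?s' p = path_weight M s p" by (rule path_weight_cong) simp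
    then have "path_weight M ?s' (Suc p) = path_weight M s p * M k j"
      using s by (simp add: path_weight_Suc)
    moreover have "a * path_weight M ?s' (Suc p) \<le> c" using Suc.prems s by simp
    ultimately show "a * M k j * path_weight M s p \<le> c" by (simp add: ac_simps)
  qed
  then show ?case by (simp add: mmult_def sum_distrib_left sf_sum_le_iff ac_simps)
qed

lemma path_weight_remove_cycle:
  assumes "a < b" "b \<le> p" "s a = s b"
  defines "d \<equiv> b - a"
  defines "s' \<equiv> (\<lambda>t. if t < a then s t else s (t + d))"
  shows "path_weight M s p = path_weight M s' (p - d) * (\<Prod>t\<in>{a..<b}. M (s t) (s (Suc t)))"
proof -
  let ?g = "\<lambda>t. M (s t) (s (Suc t))" and ?g' = "\<lambda>t. M (s' t) (s' (Suc t))"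
  have "path_weight M s p = prod ?g {0..<a} * prod ?g {a..<b} * prod ?g {b..<p}"
    unfolding path_weight_def using assms(1,2)
    by (simp add: prod.atLeastLessThan_concat lessThan_atLeast0)
  moreover have "prod ?g {0..<a} = prod ?g' {0..<a}"
  proof (rule prod.cong)
    fix t assume t: "t \<in> {0..<a}"
    show "?g t = ?g' t"
    proof (cases "Suc t < a")
      case False
      then have "Suc t = a" "Suc t + d = b" using t assms(1) by (auto simp: d_def)
      then show ?thesis using t assms(3) by (simp add: s'_def)
    qed (use t in \<open>simp add: s'_def\<close>)
  qed simp
  moreover have "prod ?g {b..<p} = prod ?g' {a..<p-d}"
  proof -
    have "prod ?g {b..<p} = prod ?g {a+d..<(p-d)+d}" using assms(1,2) by (simp add: d_def)
    also have "\<dots> = (\<Prod>t\<in>{a..<p-d}. ?g (t + d))" by (rule prod.shift_bounds_nat_ivl)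
    also have "\<dots> = prod ?g' {a..<p-d}" by (rule prod.cong) (auto simp: s'_def)
    finally show ?thesis .
  qed
  moreover have "path_weight M s' (p - d) = prod ?g' {0..<a} * prod ?g' {a..<p-d}"
    unfolding path_weight_def using assms(1,2)
    by (simp add: prod.atLeastLessThan_concat lessThan_atLeast0 d_def)
  ultimately show ?thesis by (simp add: ac_simps)
qed

text \<open>A cycle of length \<open>b - a \<le> n\<close> is encoded as the segment of a sequence \<open>s\<close> between two
  positions \<open>a < b\<close> with \<open>s a = s b\<close>.\<close>

definition cycles_le_one :: "('n::finite \<Rightarrow> 'n \<Rightarrow> 'a::idem_semifield) \<Rightarrow> bool" where
  "cycles_le_one M \<longleftrightarrow> (\<forall>s a b. a < b \<longrightarrow> b - a \<le> card (UNIV::'n set) \<longrightarrow> s a = s b \<longrightarrow>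
       (\<Prod>t\<in>{a..<b}. M (s t) (s (Suc t))) \<le> 1)"

text \<open>By pigeonhole a path of length \<open>\<ge> n\<close> revisits a node within its first \<open>n + 1\<close> positions;
  cutting out that cycle does not decrease the weight.\<close>

lemma path_weight_le_short_mpow:
  fixes M :: "'n::finite \<Rightarrow> 'n \<Rightarrow> 'a::idem_semifield"
  assumes "cycles_le_one M" "s 0 = i" "s p = j"
  shows "\<exists>q<card (UNIV::'n set). path_weight M s p \<le> mpow M q i j"
  using assms(2,3)
proof (induction p arbitrary: s rule: less_induct)
  case (less p)
  let ?n = "card (UNIV::'n set)"
  show ?case
  proof (cases "p < ?n")
    case True
    then show ?thesis using path_weight_le_mpow less.prems by blast
  next
    case False
    have "\<not> inj_on s {..?n}"
      using card_inj_on_le[of s "{..?n}" UNIV] by auto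
    then obtain a b where ab: "a < b" "b \<le> ?n" "s a = s b"
      unfolding inj_on_def by (metis atMost_iff linorder_neqE_nat)
    define d where "d = b - a"
    define s' where "s' = (\<lambda>t. if t < a then s t else s (t + d))"
    have bp: "b \<le> p" using ab False by simp
    have "s' 0 = i" "s' (p - d) = j" "p - d < p"
      using less.prems ab bp by (auto simp: s'_def d_def)
    then obtain q where q: "q < ?n" "path_weight M s' (p - d) \<le> mpow M q i j"
      using less.IH by blast
    have "(\<Prod>t\<in>{a..<b}. M (s t) (s (Suc t))) \<le> 1"
      using assms(1) ab unfolding cycles_le_one_def by auto
    then have "path_weight M s p \<le> path_weight M s' (p - d) * 1"
      unfolding path_weight_remove_cycle[OF ab(1) bp ab(3)] s'_def d_def
      by (rule sf_mult_left_mono)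
    then show ?thesis using q by auto
  qed
qed

lemma mpow_le_kstar:
  fixes M :: "'n::finite \<Rightarrow> 'n \<Rightarrow> 'a::idem_semifield"
  assumes "cycles_le_one M"
  shows "mpow M p i j \<le> kstar M i j"
proof -
  have "1 * mpow M p i j \<le> kstar M i j"
  proof (rule mpow_le_by_paths)
    fix s assume "s 0 = i" "s p = j"
    then obtain q where "q < card (UNIV::'n set)" "path_weight M s p \<le> mpow M q i j"
      using path_weight_le_short_mpow[OF assms] by blast
    then show "1 * path_weight M s p \<le> kstar M i j"
      using mpow_le_kstar_short[of q M i j] by simp
  qed
  then show ?thesis by simp
qed

section \<open>Solutions of \<open>M x \<le> x\<close> via the Kleene star\<close>

lemma mpow_mult_le_of_subeigen:
  assumes "\<forall>i j. M i j * x j \<le> x i"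
  shows "mpow M p i j * x j \<le> x i"
proof (induction p arbitrary: j)
  case 0
  then show ?case by (simp add: mid_def sf_zero_least)
next
  case (Suc p)
  have "mpow M p i k * M k j * x j \<le> x i" for k
  proof -
    have "mpow M p i k * (M k j * x j) \<le> mpow M p i k * x k"
      using assms by (intro sf_mult_left_mono) auto
    also have "\<dots> \<le> x i" using Suc .
    finally show ?thesis by (simp add: ac_simps)
  qed
  then show ?case by (simp add: mmult_def sum_distrib_right sf_sum_le_iff)
qed

lemma kstar_mvec_eq_of_subeigen:
  fixes M :: "'n::finite \<Rightarrow> 'n \<Rightarrow> 'a::idem_semifield"
  assumes "\<forall>i j. M i j * x j \<le> x i"
  shows "mvec (kstar M) x = x"
proof
  fix i
  have "x i = mpow M 0 i i * x i" by (simp add: mid_def)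
  also have "\<dots> \<le> kstar M i i * x i"
    using mpow_le_kstar_short[OF card_UNIV_pos] by (rule sf_mult_right_mono)
  also have "\<dots> \<le> mvec (kstar M) x i"
    unfolding mvec_def by (rule sf_member_le_sum) auto
  finally have "x i \<le> mvec (kstar M) x i" .
  moreover have "mvec (kstar M) x i \<le> x i"
    unfolding mvec_def kstar_def
    by (simp add: sum_distrib_right sf_sum_le_iff mpow_mult_le_of_subeigen[OF assms])
  ultimately show "mvec (kstar M) x i = x i" by simp
qed

lemma kstar_mvec_subeigen:
  fixes M :: "'n::finite \<Rightarrow> 'n \<Rightarrow> 'a::idem_semifield"
  assumes "cycles_le_one M"
  shows "M i j * mvec (kstar M) u j \<le> mvec (kstar M) u i"
proof -
  have "M i j * mpow M p j l * u l \<le> mvec (kstar M) u i" for p l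
  proof -
    have "M i j * mpow M p j l * u l \<le> mpow M (Suc p) i l * u l"
      by (intro sf_mult_right_mono mult_mpow_le_mpow_Suc)
    also have "\<dots> \<le> kstar M i l * u l"
      by (intro sf_mult_right_mono mpow_le_kstar[OF assms])
    also have "\<dots> \<le> mvec (kstar M) u i"
      unfolding mvec_def by (rule sf_member_le_sum) auto
    finally show ?thesis .
  qed
  then show ?thesis
    unfolding mvec_def kstar_def
    by (simp add: sum_distrib_right sum_distrib_left sf_sum_le_iff mult.assoc)
qed

lemma regular_kstar_mvec:
  fixes M :: "'n::finite \<Rightarrow> 'n \<Rightarrow> 'a::idem_semifield"
  assumes "\<forall>i j. M i j \<noteq> 0" "u \<noteq> (\<lambda>_. 0)"
  shows "regular (mvec (kstar M) u)"
  unfolding regular_def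
proof
  fix i
  obtain j where j: "u j \<noteq> 0" using assms(2) by auto
  have "kstar M i j \<noteq> 0"
  proof (cases "i = j")
    case True
    then have "1 \<le> kstar M i j"
      using mpow_le_kstar_short[OF card_UNIV_pos, of M i i] by (simp add: mid_def)
    then show ?thesis by (metis order_antisym sf_zero_least zero_neq_one)
  next
    case False
    then have "card {i, j} \<le> card (UNIV::'n set)" by (intro card_mono) auto
    then have "mpow M 1 i j \<le> kstar M i j" using False by (intro mpow_le_kstar_short) auto
    then have "M i j \<le> kstar M i j" unfolding mpow_1 .
    then show ?thesis using assms(1) sf_zero_least[of "M i j"] by auto
  qed
  then have "kstar M i j * u j \<noteq> 0" using j by (rule sf_mult_nonzero)
  moreover have "kstar M i j * u j \<le> mvec (kstar M) u i"
    unfolding mvec_def by (rule sf_member_le_sum) auto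
  ultimately show "mvec (kstar M) u i \<noteq> 0" by (metis order_antisym sf_zero_least)
qed

lemma regular_subeigen_eq_kstar_image:
  fixes M :: "'n::finite \<Rightarrow> 'n \<Rightarrow> 'a::idem_semifield"
  assumes "cycles_le_one M" "\<forall>i j. M i j \<noteq> 0"
  shows "{x. regular x \<and> (\<forall>i j. M i j * x j \<le> x i)} = {mvec (kstar M) u | u. u \<noteq> (\<lambda>_. 0)}"
proof safe
  fix x assume "regular x" "\<forall>i j. M i j * x j \<le> x i"
  then show "\<exists>u. x = mvec (kstar M) u \<and> u \<noteq> (\<lambda>_. 0)"
    using kstar_mvec_eq_of_subeigen[of M x] by (intro exI[of _ x]) (auto simp: regular_def fun_eq_iff)
qed (use assms kstar_mvec_subeigen regular_kstar_mvec in auto)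

section \<open>Spectral radius\<close>

abbreviation cycle_weight :: "('n \<Rightarrow> 'n \<Rightarrow> 'a::idem_semifield) \<Rightarrow> nat \<Rightarrow> (nat \<Rightarrow> 'n) \<Rightarrow> 'a" where
  "cycle_weight B k t \<equiv> \<Prod>j<k. B (t j) (t (Suc j mod k))"

lemma cycle_weight_le_spec_rad_power:
  fixes B :: "'n::finite \<Rightarrow> 'n \<Rightarrow> 'a::idem_semifield"
  assumes "0 < k" "k \<le> card (UNIV::'n set)"
  shows "cycle_weight B k t \<le> spec_rad B ^ k"
proof -
  let ?t = "restrict t {..<k}"
  have t: "?t \<in> PiE {..<k} (\<lambda>_. UNIV)"
    by (simp only: restrict_PiE_iff) simp
  have "cycle_weight B k t = cycle_weight B k ?t"
    using assms(1) by (intro prod.cong) auto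
  also have "root_sf k \<dots> \<le> (\<Sum>t\<in>PiE {..<k} (\<lambda>_. UNIV). root_sf k (cycle_weight B k t))"
    by (rule sf_member_le_sum[OF _ t]) (simp add: finite_PiE)
  also have "\<dots> \<le> spec_rad B"
    unfolding spec_rad_def using assms by (intro sf_member_le_sum) auto
  finally show ?thesis using root_sf_le_iff[OF assms(1)] by blast
qed

lemma diag_le_spec_rad: "B i i \<le> spec_rad B"
  for B :: "'n::finite \<Rightarrow> 'n \<Rightarrow> 'a::idem_semifield"
  using cycle_weight_le_spec_rad_power[OF _ Suc_leI[OF card_UNIV_pos], of B "\<lambda>_. i"] by simp

lemma spec_rad_nonzero:
  fixes B :: "'n::finite \<Rightarrow> 'n \<Rightarrow> 'a::idem_semifield"
  assumes "\<forall>i j. B i j \<noteq> 0"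
  shows "spec_rad B \<noteq> 0"
  using assms diag_le_spec_rad[of B] sf_zero_least by (metis order_antisym)

lemma bij_betw_Suc_mod: "0 < k \<Longrightarrow> bij_betw (\<lambda>j. Suc j mod k) {..<k} {..<k}"
proof -
  assume "0 < k"
  moreover have inj: "inj_on (\<lambda>j. Suc j mod k) {..<k}"
    by (auto simp: inj_on_def mod_Suc split: if_splits)
  ultimately have "(\<lambda>j. Suc j mod k) ` {..<k} = {..<k}"
    by (intro endo_inj_surj) auto
  then show ?thesis using inj by (simp add: bij_betw_def)
qed

lemma spec_rad_le_of_regular:
  fixes B :: "'n::finite \<Rightarrow> 'n \<Rightarrow> 'a::idem_semifield"
  assumes reg: "regular x" and H: "\<And>i j. inverse (x i) * B i j * x j \<le> c"
  shows "spec_rad B \<le> c"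
proof -
  have nz: "\<And>i. x i \<noteq> 0" using reg by (simp add: regular_def)
  have B_le: "B i j \<le> c * (x i * inverse (x j))" for i j
  proof -
    have "x i * (inverse (x i) * B i j * x j) * inverse (x j)
        = (x i * inverse (x i)) * B i j * (x j * inverse (x j))" by (simp add: ac_simps)
    then have "B i j = x i * (inverse (x i) * B i j * x j) * inverse (x j)"
      using nz by (simp add: right_inverse_sf)
    also have "\<dots> \<le> x i * c * inverse (x j)"
      by (intro sf_mult_right_mono sf_mult_left_mono H)
    finally show ?thesis by (simp add: ac_simps)
  qed
  have "cycle_weight B k t \<le> c ^ k" if k: "0 < k" for k t
  proof -
    have "cycle_weight B k t \<le> (\<Prod>j<k. c * (x (t j) * inverse (x (t (Suc j mod k)))))"
      by (intro sf_prod_mono B_le)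
    also have "\<dots> = c ^ k * ((\<Prod>j<k. x (t j)) * (\<Prod>j<k. inverse (x (t (Suc j mod k)))))"
      by (simp add: prod.distrib)
    also have "(\<Prod>j<k. inverse (x (t (Suc j mod k)))) = (\<Prod>j<k. inverse (x (t j)))"
      using prod.reindex_bij_betw[OF bij_betw_Suc_mod[OF k], of "\<lambda>j. inverse (x (t j))"] by simp
    also have "(\<Prod>j<k. x (t j)) * (\<Prod>j<k. inverse (x (t j))) = 1"
      using nz by (simp add: prod.distrib[symmetric] right_inverse_sf)
    finally show ?thesis by simp
  qed
  then show ?thesis
    unfolding spec_rad_def by (auto simp: sf_sum_le_iff finite_PiE root_sf_le_iff)
qed

lemma cycles_le_one_spec_rad_normalized:
  fixes B :: "'n::finite \<Rightarrow> 'n \<Rightarrow> 'a::idem_semifield"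
  assumes "spec_rad B \<noteq> 0"
  shows "cycles_le_one (msmult (inverse (spec_rad B)) B)"
  unfolding cycles_le_one_def
proof (intro allI impI)
  fix s :: "nat \<Rightarrow> 'n" and a b :: nat
  assume ab: "a < b" "b - a \<le> card (UNIV::'n set)" "s a = s b"
  define k where "k = b - a"
  have k: "0 < k" "k \<le> card (UNIV::'n set)" using ab by (auto simp: k_def)
  have "(\<Prod>t\<in>{a..<b}. B (s t) (s (Suc t))) = (\<Prod>j\<in>{0..<k}. B (s (j + a)) (s (Suc (j + a))))"
    using prod.shift_bounds_nat_ivl[of _ 0 a k] ab by (simp add: k_def)
  also have "\<dots> = cycle_weight B k (\<lambda>j. s (a + j))"
  proof (unfold atLeast0LessThan, rule prod.cong)
    fix j assume j: "j \<in> {..<k}"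
    have "s (a + Suc j mod k) = s (Suc (j + a))"
    proof (cases "Suc j < k")
      case False
      then have "Suc j = k" "Suc (j + a) = b" using j ab by (auto simp: k_def)
      then show ?thesis using ab by simp
    qed (simp add: add.commute)
    then show "B (s (j + a)) (s (Suc (j + a))) = B (s (a + j)) (s (a + Suc j mod k))"
      by (simp add: add.commute)
  qed simp
  also have "\<dots> \<le> spec_rad B ^ k" using k by (rule cycle_weight_le_spec_rad_power)
  finally have "inverse (spec_rad B) ^ k * (\<Prod>t\<in>{a..<b}. B (s t) (s (Suc t)))
      \<le> (inverse (spec_rad B) * spec_rad B) ^ k"
    unfolding power_mult_distrib by (rule sf_mult_left_mono)
  then show "(\<Prod>t\<in>{a..<b}. msmult (inverse (spec_rad B)) B (s t) (s (Suc t))) \<le> 1"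
    using assms by (simp add: msmult_def prod.distrib k_def sf_left_inverse)
qed

section \<open>The objective function\<close>

definition inv_form :: "('n::finite \<Rightarrow> 'n \<Rightarrow> 'a::idem_semifield) \<Rightarrow> ('n \<Rightarrow> 'a) \<Rightarrow> 'a" where
  "inv_form B x = (\<Sum>i\<in>UNIV. \<Sum>j\<in>UNIV. inverse (x i) * B i j * x j)"

lemma inv_form_madd: "inv_form (madd B C) x = inv_form B x + inv_form C x"
  by (simp add: inv_form_def madd_def distrib_left distrib_right sum.distrib)

lemma inv_form_msmult: "inv_form (msmult c B) x = c * inv_form B x"
  by (simp add: inv_form_def msmult_def sum_distrib_left ac_simps)

lemma inv_form_sum: "inv_form (\<lambda>i j. \<Sum>k\<in>K. M k i j) x = (\<Sum>k\<in>K. inv_form (M k) x)"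
  unfolding inv_form_def sum_distrib_left sum_distrib_right
  by (subst sum.swap) (simp add: sum.swap[of _ K])

lemma mdist_outer_inv:
  fixes A :: "'n::finite \<Rightarrow> 'n \<Rightarrow> 'a::idem_semifield"
  assumes "regular x"
  shows "mdist A (outer_inv x) = inv_form (madd A (minv A)) x"
proof -
  have nz: "\<And>i. x i \<noteq> 0" using assms by (simp add: regular_def)
  have outer: "outer_inv x i l = x i * inverse (x l)" for i l
    using nz by (simp add: outer_inv_def vinv_def)
  have minv_outer: "minv (outer_inv x) i l = x i * inverse (x l)" for i l
  proof -
    have "outer_inv x l i \<noteq> 0" using nz by (simp add: outer sf_mult_nonzero sf_inverse_nonzero)
    then have "minv (outer_inv x) i l = inverse (x l * inverse (x i))" by (simp add: minv_def outer)
    also have "\<dots> = x i * inverse (x l)"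
      using nz by (simp add: sf_inverse_mult sf_inverse_nonzero sf_inverse_inverse mult.commute)
    finally show ?thesis .
  qed
  have "mtr (mmult (minv (outer_inv x)) A) = (\<Sum>i\<in>UNIV. \<Sum>l\<in>UNIV. inverse (x l) * A l i * x i)"
    unfolding mtr_def mmult_def minv_outer by (simp add: ac_simps)
  also have "\<dots> = inv_form A x"
    unfolding inv_form_def by (rule sum.swap)
  finally have "mtr (mmult (minv (outer_inv x)) A) = inv_form A x" .
  moreover have "mtr (mmult (minv A) (outer_inv x)) = inv_form (minv A) x"
    unfolding mtr_def mmult_def outer inv_form_def by (simp add: ac_simps)
  ultimately show ?thesis by (simp add: mdist_def inv_form_madd)
qed

lemma spec_rad_le_inv_form: "regular x \<Longrightarrow> spec_rad B \<le> inv_form B x"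
proof (rule spec_rad_le_of_regular)
  fix i j
  have "inverse (x i) * B i j * x j \<le> (\<Sum>j\<in>UNIV. inverse (x i) * B i j * x j)"
    by (rule sf_member_le_sum) auto
  also have "\<dots> \<le> inv_form B x"
    unfolding inv_form_def by (rule sf_member_le_sum[where f = "\<lambda>i. \<Sum>j\<in>UNIV. inverse (x i) * B i j * x j"]) auto
  finally show "inverse (x i) * B i j * x j \<le> inv_form B x" .
qed

lemma inv_form_le_iff:
  fixes B :: "'n::finite \<Rightarrow> 'n \<Rightarrow> 'a::idem_semifield"
  assumes "regular x" "c \<noteq> 0"
  shows "inv_form B x \<le> c \<longleftrightarrow> (\<forall>i j. msmult (inverse c) B i j * x j \<le> x i)"
proof -
  have "inverse (x i) * B i j * x j \<le> c \<longleftrightarrow> inverse c * B i j * x j \<le> x i" for i j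
  proof -
    have xi: "x i \<noteq> 0" using assms(1) by (simp add: regular_def)
    let ?d = "c * inverse (x i)"
    have "?d \<noteq> 0" using assms(2) xi by (simp add: sf_mult_nonzero sf_inverse_nonzero)
    moreover have "?d * (inverse c * B i j * x j) = (c * inverse c) * (inverse (x i) * B i j * x j)"
      by (simp add: ac_simps)
    then have "?d * (inverse c * B i j * x j) = inverse (x i) * B i j * x j"
      using assms(2) by (simp add: right_inverse_sf)
    moreover have "?d * x i = c" using xi by (simp add: mult.assoc sf_left_inverse)
    ultimately show ?thesis using sf_mult_le_cancel_left[of ?d] by metis
  qed
  then show ?thesis by (simp add: inv_form_def msmult_def sf_sum_le_iff mult.assoc)
qed

theorem theorem3:
  fixes A :: "nat \<Rightarrow> 'n::finite \<Rightarrow> 'n \<Rightarrow> 'a::idem_semifield"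
    and w :: "nat \<Rightarrow> 'a" and m :: nat
  defines "B \<equiv> (\<lambda>i j. \<Sum>k<m. msmult (w k) (madd (A k) (minv (A k))) i j)"
  defines "\<mu> \<equiv> spec_rad B"
  defines "B\<mu> \<equiv> msmult (inverse \<mu>) B"
  defines "f \<equiv> (\<lambda>x::'n \<Rightarrow> 'a. \<Sum>k<m. w k * mdist (A k) (outer_inv x))"
  assumes "\<forall>i j. B i j \<noteq> 0"
  shows "(\<forall>x. regular x \<longrightarrow> \<mu> \<le> f x) \<and> (\<exists>x. regular x \<and> f x = \<mu>) \<and>
         {x. regular x \<and> f x = \<mu>} = {mvec (kstar B\<mu>) u | u. u \<noteq> (\<lambda>_. 0)}"
proof -
  have \<mu>: "\<mu> \<noteq> 0" unfolding \<mu>_def using assms(5) by (rule spec_rad_nonzero)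
  have f_eq: "f x = inv_form B x" if "regular x" for x
    using that by (simp add: f_def B_def inv_form_sum inv_form_msmult mdist_outer_inv)
  have lower: "\<mu> \<le> f x" if "regular x" for x
    using that by (simp add: f_eq \<mu>_def spec_rad_le_inv_form)
  have "f x = \<mu> \<longleftrightarrow> (\<forall>i j. B\<mu> i j * x j \<le> x i)" if "regular x" for x
    using lower[OF that] f_eq[OF that] inv_form_le_iff[OF that \<mu>, of B]
    unfolding B\<mu>_def by (metis antisym order_refl)
  then have "{x. regular x \<and> f x = \<mu>} = {x. regular x \<and> (\<forall>i j. B\<mu> i j * x j \<le> x i)}"
    by blast
  also have "\<dots> = {mvec (kstar B\<mu>) u | u. u \<noteq> (\<lambda>_. 0)}"
  proof (rule regular_subeigen_eq_kstar_image)
    show "cycles_le_one B\<mu>"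
      using \<mu> unfolding B\<mu>_def \<mu>_def by (rule cycles_le_one_spec_rad_normalized)
    show "\<forall>i j. B\<mu> i j \<noteq> 0"
      using assms(5) \<mu> by (simp add: B\<mu>_def msmult_def sf_mult_nonzero sf_inverse_nonzero)
  qed
  finally have "{x. regular x \<and> f x = \<mu>} = {mvec (kstar B\<mu>) u | u. u \<noteq> (\<lambda>_. 0)}" .
  moreover have "(\<lambda>_. 1) \<noteq> (\<lambda>_::'n. 0::'a)" by (simp add: fun_eq_iff)
  ultimately show ?thesis using lower by blast
qed

end
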